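(* Let $s\in\mathscr S_+^\circ$ with $\operatorname{supp}(s)=\{d_1>\cdots>d_m\}$, and let $s'\in\mathscr S_+$ satisfy $\operatorname{supp}(s')\subsetneq\operatorname{supp}(s)$ and $\operatorname{supp}(s)\setminus\operatorname{supp}(s')\subseteq\{d_{2i}: 1\le 2i\le m\}$. Then $s'\notin\mathscr S_+^\circ$ and $\lfloor s'\rfloor=s$. In particular $s\prec s'$ and $\mathfrak d(s')=\mathfrak d(s)$.
   Context: $\omega=\{0,1,\dots\}$, $[m]=\{1,\dots,m\}$. A finite sign sequence is $s\in\{-,0,+\}^\omega$ with finitely many nonzero entries; $\mathscr S$ their set; $\operatorname{supp}(s)=\{i:s_i\ne0\}$; $\mathscr S_+=\mathscr S\cap\{0,+\}^\omega$. $\mathrm{SC}(t)$ = number of pairs $i<j$ with $\{t_i,t_j\}=\{-,+\}$ and $t_k=0$ for $i<k<j$. $\mathfrak d(s)=\max\{\mathrm{SC}(t):t\in\mathscr S,\ t_i\in\{-,0,s_i\}\ \forall i\}$. $\mathscr S_+^\circ=\{s\in\mathscr S_+:\mathfrak d(s)=\#\operatorname{supp}(s)\}$. Interval decomposition of $s\in\mathscr S_+$: $\operatorname{supp}(s)=X_0\amalg\cdots\amalg X_k$ into intervals with $0\in X_0$ if $0\in\operatorname{supp}(s)$ else $X_0=\emptyset$, $X_i\neq\emptyset$ for $i\in[k]$, $\min X_i-\max X_{i-1}\ge2$ ($\max\emptyset=-\infty$). $\lfloor X_i\rfloor=\{\min X_i-1\}\amalg X_i$ if $\#X_i$ odd,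 else $X_i$; $\lceil X_i\rceil=X_i\amalg\{\max X_i+1\}$ if $\#X_i$ odd, else $X_i$; $\operatorname{supp}(\lfloor s\rfloor)=X_0\amalg\lfloor X_1\rfloor\amalg\cdots\amalg\lfloor X_k\rfloor$, $\operatorname{supp}(\lceil s\rceil)=X_0\amalg\lceil X_1\rceil\amalg\cdots\amalg\lceil X_k\rceil$. On $\mathscr S_+^\circ$: $s\preceq_0 s'$ iff, writing supports in decreasing order $\{d_1>\cdots>d_m\}$, $\{d'_1>\cdots>d'_{m'}\}$, $m\le m'$ and $d_i\le d'_i$ for $i\in[m]$. On $\mathscr S_+$: $s\preceq s'$ iff $s=s'$, or $s\ne s'$ and $\lceil s\rceil\preceq_0\lfloor s'\rfloor$; $s\prec s'$ means $s\preceq s'$, $s\neq s'$. *)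

theory Defs
  imports Main
begin

datatype sign = Neg | Zero | Pos

type_synonym sseq = "nat \<Rightarrow> sign"

definition supp :: "sseq \<Rightarrow> nat set" where
  "supp s = {i. s i \<noteq> Zero}"

definition SS :: "sseq set" where
  "SS = {s. finite (supp s)}"

definition SSplus :: "sseq set" where
  "SSplus = {s. s \<in> SS \<and> (\<forall>i. s i \<in> {Zero, Pos})}"

definition SC :: "sseq \<Rightarrow> nat" where
  "SC t = card {(i, j). i < j \<and> {t i, t j} = {Neg, Pos} \<and> (\<forall>k. i < k \<and> k < j \<longrightarrow> t k = Zero)}"

definition dd :: "sseq \<Rightarrow> nat" where
  "dd s = Max {SC t | t. t \<in> SS \<and> (\<forall>i. t i \<in> {Neg, Zero, s i})}"

definition SSplus_circ :: "sseq set" where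
  "SSplus_circ = {s. s \<in> SSplus \<and> dd s = card (supp s)}"

text \<open>the support listed in decreasing order: d_1 > ... > d_m is (dec_supp s) ! 0, ..., ! (m-1)\<close>
definition dec_supp :: "sseq \<Rightarrow> nat list" where
  "dec_supp s = rev (sorted_list_of_set (supp s))"

text \<open>the blocks X_0, X_1, ..., X_k of the interval decomposition of a set A of naturals
  are exactly its maximal intervals (X_0 being the one containing 0, if any)\<close>
definition max_interval :: "nat set \<Rightarrow> nat set \<Rightarrow> bool" where
  "max_interval A X \<longleftrightarrow> (\<exists>a b. a \<le> b \<and> X = {a..b} \<and> X \<subseteq> A \<and>
      (a = 0 \<or> a - 1 \<notin> A) \<and> b + 1 \<notin> A)"

definition of_supp :: "nat set \<Rightarrow> sseq" where
  "of_supp A = (\<lambda>i. if i \<in> A then Pos else Zero)"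

definition sfloor :: "sseq \<Rightarrow> sseq" where
  "sfloor s = of_supp (supp s \<union>
     {Min X - 1 | X. max_interval (supp s) X \<and> 0 \<notin> X \<and> odd (card X)})"

definition sceil :: "sseq \<Rightarrow> sseq" where
  "sceil s = of_supp (supp s \<union>
     {Max X + 1 | X. max_interval (supp s) X \<and> 0 \<notin> X \<and> odd (card X)})"

definition preceq0 :: "sseq \<Rightarrow> sseq \<Rightarrow> bool" where
  "preceq0 s s' \<longleftrightarrow> s \<in> SSplus_circ \<and> s' \<in> SSplus_circ \<and>
     length (dec_supp s) \<le> length (dec_supp s') \<and>
     (\<forall>i < length (dec_supp s). dec_supp s ! i \<le> dec_supp s' ! i)"

definition spreceq :: "sseq \<Rightarrow> sseq \<Rightarrow> bool" where
  "spreceq s s' \<longleftrightarrow> s \<in> SSplus \<and> s' \<in> SSplus \<and>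
     (s = s' \<or> (s \<noteq> s' \<and> preceq0 (sceil s) (sfloor s')))"

definition sprec :: "sseq \<Rightarrow> sseq \<Rightarrow> bool" where
  "sprec s s' \<longleftrightarrow> spreceq s s' \<and> s \<noteq> s'"

end

theory Submission
  imports Defs
begin

text \<open>
  Put \<open>D = supp s\<close>. The witness that alternates in sign along each block of \<open>D\<close>, ends every
  block with \<open>+\<close> and flanks the blocks by \<open>-\<close>, has a sign change \<open>(x, x + 1)\<close> for every
  \<open>x \<in> D\<close>, and one more at the start of every block that does not contain 0 and has odd
  length. As \<open>dd s = card D\<close>, the latter cannot occur: all such blocks have even length, so
  \<open>sceil s = s\<close>, and the parity of the position of \<open>x\<close> in the list \<open>d\<^sub>1 > \<dots> > d\<^sub>m\<close>
  agrees with the parity of its distance to the top of its block. The removed points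
  \<open>d\<^sub>2\<^sub>i\<close> therefore sit at odd distance, where the witness is \<open>-\<close>; so the witness is
  admissible for \<open>s'\<close> as well, and \<open>dd s' \<ge> card D = dd s \<ge> dd s'\<close>. Removing these points
  cuts \<open>D\<close> into blocks whose odd ones are exactly those directly above a removed point, which
  is what \<open>sfloor s' = s\<close> says.
\<close>

section \<open>Sign changes and \<open>dd\<close>\<close>

definition sign_change_pairs :: "sseq \<Rightarrow> (nat \<times> nat) set" where
  "sign_change_pairs t = {(i, j). i < j \<and> {t i, t j} = {Neg, Pos} \<and> (\<forall>k. i < k \<and> k < j \<longrightarrow> t k = Zero)}"

lemma SC_eq_card_sign_change_pairs: "SC t = card (sign_change_pairs t)"
  unfolding SC_def sign_change_pairs_def by simp

lemma sign_pair_nonzero: "{a, b} = {Neg, Pos} \<Longrightarrow> a \<noteq> Zero \<and> b \<noteq> Zero \<and> (a = Pos \<or> b = Pos)"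
  by (cases a; cases b) (auto simp: doubleton_eq_iff)

lemma sign_change_pairs_left_unique:
  "(i, j) \<in> sign_change_pairs t \<Longrightarrow> (i, j') \<in> sign_change_pairs t \<Longrightarrow> j = j'"
  using sign_pair_nonzero unfolding sign_change_pairs_def
  by (smt (verit) case_prodD linorder_neqE_nat mem_Collect_eq)

lemma sign_change_pairs_right_unique:
  "(i, j) \<in> sign_change_pairs t \<Longrightarrow> (i', j) \<in> sign_change_pairs t \<Longrightarrow> i = i'"
  using sign_pair_nonzero unfolding sign_change_pairs_def
  by (smt (verit) case_prodD linorder_neqE_nat mem_Collect_eq)

lemma finite_sign_change_pairs:
  assumes "t \<in> SS" shows "finite (sign_change_pairs t)"
proof -
  have "sign_change_pairs t \<subseteq> supp t \<times> supp t"
    unfolding sign_change_pairs_def supp_def using sign_pair_nonzero by auto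
  then show ?thesis using assms unfolding SS_def by (auto intro: finite_subset)
qed

text \<open>Each sign change has an endpoint carrying \<open>+\<close>, and that endpoint together with its side
  determines the pair.\<close>
lemma SC_le_twice_card:
  assumes "finite P" "\<And>i. t i = Pos \<Longrightarrow> i \<in> P"
  shows "SC t \<le> 2 * card P"
proof -
  define f where "f = (\<lambda>(i::nat, j::nat). if t i = Pos then (i, True) else (j, False))"
  have "inj_on f (sign_change_pairs t)"
  proof (rule inj_onI)
    fix p q assume p: "p \<in> sign_change_pairs t" and q: "q \<in> sign_change_pairs t" and "f p = f q"
    then show "p = q"
      using sign_change_pairs_left_unique sign_change_pairs_right_unique
      unfolding f_def by (cases p; cases q) (auto split: if_splits)
  qed
  moreover have "f ` sign_change_pairs t \<subseteq> P \<times> (UNIV :: bool set)"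
    using assms(2) sign_pair_nonzero unfolding f_def sign_change_pairs_def by (auto split: if_splits)
  ultimately have "card (sign_change_pairs t) \<le> card (P \<times> (UNIV :: bool set))"
    by (intro card_inj_on_le) (simp_all add: assms(1))
  then show ?thesis by (simp add: SC_eq_card_sign_change_pairs card_cartesian_product)
qed

lemma finite_supp_SSplus: "s \<in> SSplus \<Longrightarrow> finite (supp s)"
  unfolding SSplus_def SS_def by simp

lemma SSplus_Pos_iff: "s \<in> SSplus \<Longrightarrow> s i = Pos \<longleftrightarrow> i \<in> supp s"
  unfolding SSplus_def supp_def by auto

lemma admissible_iff:
  assumes "s \<in> SSplus"
  shows "t i \<in> {Neg, Zero, s i} \<longleftrightarrow> (t i = Pos \<longrightarrow> i \<in> supp s)"
  using SSplus_Pos_iff[OF assms, of i] by (cases "t i"; cases "s i") auto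

lemma of_supp_supp:
  assumes "s \<in> SSplus" shows "of_supp (supp s) = s"
proof
  fix i
  show "of_supp (supp s) i = s i"
    using assms unfolding of_supp_def supp_def SSplus_def by auto
qed

definition SC_values :: "sseq \<Rightarrow> nat set" where
  "SC_values s = {SC t | t. t \<in> SS \<and> (\<forall>i. t i \<in> {Neg, Zero, s i})}"

lemma dd_eq_Max_SC_values: "dd s = Max (SC_values s)"
  unfolding dd_def SC_values_def by simp

lemma finite_SC_values:
  assumes "s \<in> SSplus" shows "finite (SC_values s)"
proof (rule finite_subset)
  show "SC_values s \<subseteq> {..2 * card (supp s)}"
    using SC_le_twice_card[OF finite_supp_SSplus[OF assms]] admissible_iff[OF assms]
    unfolding SC_values_def by fastforce
qed simp

lemma SC_le_dd:
  assumes "s \<in> SSplus" "t \<in> SS" "\<And>i. t i \<in> {Neg, Zero, s i}"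
  shows "SC t \<le> dd s"
proof -
  have "SC t \<in> SC_values s" unfolding SC_values_def using assms by blast
  then show ?thesis unfolding dd_eq_Max_SC_values by (rule Max_ge[OF finite_SC_values[OF assms(1)]])
qed

lemma dd_mono:
  assumes "s \<in> SSplus" "s' \<in> SSplus" "supp s' \<subseteq> supp s"
  shows "dd s' \<le> dd s"
proof -
  have "SC_values s' \<subseteq> SC_values s"
    using assms admissible_iff[OF assms(1)] admissible_iff[OF assms(2)]
    unfolding SC_values_def by blast
  moreover have "SC (\<lambda>_. Zero) \<in> SC_values s'"
    unfolding SC_values_def SS_def supp_def by auto
  ultimately show ?thesis
    unfolding dd_eq_Max_SC_values by (auto intro!: Max_mono finite_SC_values assms(1))
qed

section \<open>Runs and ranks in a set of naturals\<close>

definition run_above :: "nat set \<Rightarrow> nat \<Rightarrow> nat" where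
  "run_above D x = card {z. x < z \<and> {x..z} \<subseteq> D}"

definition rank_above :: "nat set \<Rightarrow> nat \<Rightarrow> nat" where
  "rank_above D x = card {z\<in>D. x < z}"

lemma run_above_Suc:
  assumes "finite D" "x \<in> D" "Suc x \<in> D"
  shows "run_above D x = Suc (run_above D (Suc x))"
proof -
  have "{z. x < z \<and> {x..z} \<subseteq> D} = insert (Suc x) {z. Suc x < z \<and> {Suc x..z} \<subseteq> D}"
  proof (intro equalityI subsetI)
    fix z assume "z \<in> insert (Suc x) {z. Suc x < z \<and> {Suc x..z} \<subseteq> D}"
    moreover have "{x..z} = insert x {Suc x..z}" if "x < z" using that by auto
    ultimately show "z \<in> {z. x < z \<and> {x..z} \<subseteq> D}" using assms by auto
  qed auto
  moreover have "finite {z. Suc x < z \<and> {Suc x..z} \<subseteq> D}"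
    by (rule finite_subset[OF _ assms(1)]) auto
  ultimately show ?thesis unfolding run_above_def by simp
qed

lemma run_above_eq_0: "Suc x \<notin> D \<Longrightarrow> run_above D x = 0"
proof -
  assume "Suc x \<notin> D"
  then have "{z. x < z \<and> {x..z} \<subseteq> D} = {}" by (auto dest!: subsetD[of _ _ "Suc x"])
  then show ?thesis unfolding run_above_def by (simp only: card.empty)
qed

lemma run_above_atLeastAtMost:
  assumes "finite D" "x \<le> y" "{x..y} \<subseteq> D"
  shows "run_above D x = run_above D y + (y - x)"
  using assms
proof (induction "y - x" arbitrary: x)
  case (Suc n)
  then have "x < y" "x \<in> D" "Suc x \<in> D" "{Suc x..y} \<subseteq> D" by auto
  then show ?case using Suc run_above_Suc[of D x] by fastforce
qed simp

lemma rank_above_Min: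
  assumes "finite D" "{y\<in>D. x < y} \<noteq> {}"
  shows "rank_above D x = Suc (rank_above D (Min {y\<in>D. x < y}))"
proof -
  define A where "A = {y\<in>D. x < y}"
  have "finite A" using assms(1) unfolding A_def by auto
  have "Min A \<in> A" using Min_in[OF \<open>finite A\<close>] assms(2) unfolding A_def by auto
  have "A = insert (Min A) {z\<in>D. Min A < z}"
  proof (intro equalityI subsetI)
    fix z assume "z \<in> A"
    then have "Min A \<le> z" using \<open>finite A\<close> by auto
    then show "z \<in> insert (Min A) {z\<in>D. Min A < z}" using \<open>z \<in> A\<close> unfolding A_def by auto
  next
    fix z assume "z \<in> insert (Min A) {z\<in>D. Min A < z}"
    then show "z \<in> A" using \<open>Min A \<in> A\<close> unfolding A_def by auto
  qed
  moreover have "finite {z\<in>D. Min A < z}" using assms(1) by auto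
  ultimately show ?thesis unfolding rank_above_def A_def by (metis card_insert_disjoint less_irrefl mem_Collect_eq)
qed

lemma rank_above_sorted_nth:
  assumes "finite D" "k < card D"
  shows "rank_above D (rev (sorted_list_of_set D) ! k) = k"
proof -
  define xs where "xs = rev (sorted_list_of_set D)"
  have sorted: "sorted_wrt (>) xs" unfolding xs_def sorted_wrt_rev
    using strict_sorted_list_of_set[of D] by simp
  have "distinct xs" "set xs = D" "k < length xs" unfolding xs_def using assms by auto
  have "{z\<in>D. xs ! k < z} = (\<lambda>i. xs ! i) ` {..<k}"
  proof (intro equalityI subsetI)
    fix z assume "z \<in> {z\<in>D. xs ! k < z}"
    then obtain i where i: "i < length xs" "z = xs ! i" "xs ! k < z"
      using \<open>set xs = D\<close> by (auto simp: in_set_conv_nth)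
    then have "i < k"
      using sorted_wrt_nth_less[OF sorted _ i(1), of k] by (metis less_asym linorder_neqE_nat)
    then show "z \<in> (\<lambda>i. xs ! i) ` {..<k}" using i by auto
  next
    fix z assume "z \<in> (\<lambda>i. xs ! i) ` {..<k}"
    then show "z \<in> {z\<in>D. xs ! k < z}"
      using sorted_wrt_nth_less[OF sorted _ \<open>k < length xs\<close>] \<open>k < length xs\<close> \<open>set xs = D\<close> by auto
  qed
  moreover have "inj_on (\<lambda>i. xs ! i) {..<k}"
    using \<open>distinct xs\<close> \<open>k < length xs\<close> by (auto simp: inj_on_def nth_eq_iff_index_eq)
  ultimately show ?thesis unfolding rank_above_def xs_def by (simp add: card_image)
qed

text \<open>A block of \<open>D\<close> starting at \<open>a\<close> has \<open>run_above D a + 1\<close> elements, so this says that every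
  maximal interval of \<open>D\<close> not containing \<open>0\<close> has even cardinality.\<close>
definition even_blocks :: "nat set \<Rightarrow> bool" where
  "even_blocks D \<longleftrightarrow> (\<forall>a\<in>D. 0 < a \<longrightarrow> a - 1 \<notin> D \<longrightarrow> odd (run_above D a))"

lemma even_card_max_interval:
  assumes "finite D" "even_blocks D" "max_interval D X" "0 \<notin> X"
  shows "even (card X)"
proof -
  obtain a b where ab: "a \<le> b" "X = {a..b}" "X \<subseteq> D" "a - 1 \<notin> D" "Suc b \<notin> D" "0 < a"
    using assms(3,4) unfolding max_interval_def by fastforce
  then have "odd (run_above D a)" using assms(2) unfolding even_blocks_def by auto
  then show ?thesis
    using run_above_atLeastAtMost[OF assms(1) ab(1)] run_above_eq_0[OF ab(5)] ab by simp
qed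

text \<open>Stepping down from the next point of \<open>D\<close> above \<open>x\<close> raises the rank by one; inside a block
  \<open>run_above\<close> rises by one as well, and across a gap it drops from an odd value to \<open>0\<close>.\<close>
lemma even_rank_plus_run_above:
  assumes "finite D" "even_blocks D" "x \<in> D"
  shows "even (rank_above D x + run_above D x)"
  using assms(3)
proof (induction "rank_above D x" arbitrary: x rule: less_induct)
  case less
  show ?case
  proof (cases "{y\<in>D. x < y} = {}")
    case True
    then have "rank_above D x = 0" "Suc x \<notin> D" unfolding rank_above_def by (simp only: card.empty, auto)
    then show ?thesis using run_above_eq_0 by simp
  next
    case False
    define a where "a = Min {y\<in>D. x < y}"
    have "finite {y\<in>D. x < y}" using assms(1) by auto
    then have a: "a \<in> D" "x < a" "\<And>y. y \<in> D \<Longrightarrow> x < y \<Longrightarrow> a \<le> y"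
      using Min_in[OF _ False] unfolding a_def by auto
    have rank: "rank_above D x = Suc (rank_above D a)"
      using rank_above_Min[OF assms(1) False] unfolding a_def by simp
    have IH: "even (rank_above D a + run_above D a)" using less.hyps[of a] rank a by simp
    show ?thesis
    proof (cases "a = Suc x")
      case True
      then show ?thesis using run_above_Suc[OF assms(1) less.prems] a rank IH by simp
    next
      case False
      then have "Suc x \<notin> D" "a - 1 \<notin> D" using a by (fastforce, force)
      then show ?thesis
        using run_above_eq_0 assms(2) a rank IH unfolding even_blocks_def by simp
    qed
  qed
qed

section \<open>The alternating witness\<close>

definition alternating_witness :: "nat set \<Rightarrow> sseq" where
  "alternating_witness D x = (if x \<in> D then (if even (run_above D x) then Pos else Neg)
     else if Suc x \<in> D \<or> (0 < x \<and> x - 1 \<in> D) then Neg else Zero)"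

lemma alternating_witness_in_SS:
  assumes "finite D" shows "alternating_witness D \<in> SS"
proof -
  have "supp (alternating_witness D) \<subseteq> D \<union> Suc -` D \<union> Suc ` D"
  proof
    fix x assume "x \<in> supp (alternating_witness D)"
    then have "x \<in> D \<or> Suc x \<in> D \<or> (0 < x \<and> x - 1 \<in> D)"
      unfolding supp_def alternating_witness_def by (auto split: if_splits)
    then show "x \<in> D \<union> Suc -` D \<union> Suc ` D" by (cases x) auto
  qed
  moreover have "finite (D \<union> Suc -` D \<union> Suc ` D)" using assms by (simp add: finite_vimageI)
  ultimately show ?thesis unfolding SS_def by (auto intro: finite_subset)
qed

lemma alternating_witness_Pos: "alternating_witness D i = Pos \<Longrightarrow> i \<in> D \<and> even (run_above D i)"
  unfolding alternating_witness_def by (auto split: if_splits)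

lemma step_in_sign_change_pairs:
  assumes "finite D" "x \<in> D"
  shows "(x, Suc x) \<in> sign_change_pairs (alternating_witness D)"
proof -
  let ?w = "alternating_witness D"
  have x: "?w x = (if even (run_above D x) then Pos else Neg)"
    using assms(2) unfolding alternating_witness_def by simp
  have "{?w x, ?w (Suc x)} = {Neg, Pos}"
  proof (cases "Suc x \<in> D")
    case True
    then have "?w (Suc x) = (if even (run_above D (Suc x)) then Pos else Neg)"
      unfolding alternating_witness_def by simp
    then show ?thesis using x run_above_Suc[OF assms True]
      by (cases "even (run_above D (Suc x))") (simp_all add: insert_commute)
  next
    case False
    then have "?w (Suc x) = Neg" using assms(2) unfolding alternating_witness_def by simp
    then show ?thesis using x run_above_eq_0[OF False] by (simp add: insert_commute)
  qed
  moreover have "\<forall>k. x < k \<and> k < Suc x \<longrightarrow> ?w k = Zero" by auto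
  ultimately show ?thesis unfolding sign_change_pairs_def by simp
qed

lemma block_start_in_sign_change_pairs:
  assumes "a \<in> D" "0 < a" "a - 1 \<notin> D" "even (run_above D a)"
  shows "(a - 1, a) \<in> sign_change_pairs (alternating_witness D)"
proof -
  have "alternating_witness D (a - 1) = Neg" "alternating_witness D a = Pos"
    using assms unfolding alternating_witness_def by auto
  moreover have "\<forall>k. a - 1 < k \<and> k < a \<longrightarrow> alternating_witness D k = Zero" by auto
  ultimately show ?thesis using assms(2) unfolding sign_change_pairs_def by (simp add: insert_commute)
qed

lemma card_le_SC_alternating_witness:
  assumes "finite D" shows "card D \<le> SC (alternating_witness D)"
proof -
  have "card ((\<lambda>x. (x, Suc x)) ` D) \<le> card (sign_change_pairs (alternating_witness D))"
    using step_in_sign_change_pairs[OF assms]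
    by (intro card_mono finite_sign_change_pairs alternating_witness_in_SS assms) auto
  then show ?thesis by (simp add: SC_eq_card_sign_change_pairs card_image inj_on_def)
qed

lemma card_less_SC_alternating_witness:
  assumes "finite D" "a \<in> D" "0 < a" "a - 1 \<notin> D" "even (run_above D a)"
  shows "card D < SC (alternating_witness D)"
proof -
  let ?A = "insert (a - 1, a) ((\<lambda>x. (x, Suc x)) ` D)"
  have "card ?A \<le> card (sign_change_pairs (alternating_witness D))"
    using step_in_sign_change_pairs[OF assms(1)] block_start_in_sign_change_pairs[OF assms(2-5)]
    by (intro card_mono finite_sign_change_pairs alternating_witness_in_SS assms(1)) auto
  moreover have "(a - 1, a) \<notin> (\<lambda>x. (x, Suc x)) ` D" using assms by auto
  ultimately show ?thesis
    using assms(1) by (simp add: SC_eq_card_sign_change_pairs card_image inj_on_def)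
qed

lemma SC_alternating_witness_le_dd:
  assumes "s \<in> SSplus" "finite D" "\<And>i. i \<in> D \<Longrightarrow> even (run_above D i) \<Longrightarrow> i \<in> supp s"
  shows "SC (alternating_witness D) \<le> dd s"
  using assms alternating_witness_Pos admissible_iff[OF assms(1)]
  by (intro SC_le_dd alternating_witness_in_SS) auto

lemma SSplus_circ_even_blocks:
  assumes "s \<in> SSplus_circ" shows "even_blocks (supp s)"
  unfolding even_blocks_def
proof (intro ballI impI, rule ccontr)
  fix a assume "a \<in> supp s" "0 < a" "a - 1 \<notin> supp s" "\<not> odd (run_above (supp s) a)"
  moreover have s: "s \<in> SSplus" "dd s = card (supp s)"
    using assms unfolding SSplus_circ_def by auto
  ultimately have "card (supp s) < SC (alternating_witness (supp s))"
    by (intro card_less_SC_alternating_witness finite_supp_SSplus) auto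
  also have "\<dots> \<le> dd s"
    using SC_alternating_witness_le_dd[OF s(1) finite_supp_SSplus[OF s(1)]] by simp
  finally show False using s(2) by simp
qed

lemma SSplus_circ_sceil:
  assumes "s \<in> SSplus_circ" shows "sceil s = s"
proof -
  have s: "s \<in> SSplus" using assms unfolding SSplus_circ_def by simp
  have "{Max X + 1 | X. max_interval (supp s) X \<and> 0 \<notin> X \<and> odd (card X)} = {}"
    using even_card_max_interval[OF finite_supp_SSplus[OF s] SSplus_circ_even_blocks[OF assms]]
    by auto
  then show ?thesis unfolding sceil_def by (simp only: Un_empty_right of_supp_supp[OF s])
qed

lemma odd_run_above_removed:
  assumes "s \<in> SSplus_circ"
    and "supp s - S \<subseteq> {dec_supp s ! (2 * i - 1) | i. 1 \<le> 2 * i \<and> 2 * i \<le> length (dec_supp s)}"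
    and "r \<in> supp s - S"
  shows "odd (run_above (supp s) r)"
proof -
  have fin: "finite (supp s)"
    using assms(1) finite_supp_SSplus unfolding SSplus_circ_def by blast
  obtain i where i: "r = dec_supp s ! (2 * i - 1)" "1 \<le> 2 * i" "2 * i \<le> length (dec_supp s)"
    using assms(2,3) by blast
  then have "rank_above (supp s) r = 2 * i - 1"
    using rank_above_sorted_nth[OF fin, of "2 * i - 1"] unfolding dec_supp_def by simp
  moreover have "odd (2 * i - 1)" using i(2) by (cases i) auto
  moreover have "even (rank_above (supp s) r + run_above (supp s) r)"
    using even_rank_plus_run_above[OF fin SSplus_circ_even_blocks[OF assms(1)]] assms(3) by blast
  ultimately show ?thesis by simp
qed

lemma dd_eq_if_removed_odd_run_above:
  assumes "s \<in> SSplus_circ" "s' \<in> SSplus" "supp s' \<subseteq> supp s"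
    and "\<And>r. r \<in> supp s - supp s' \<Longrightarrow> odd (run_above (supp s) r)"
  shows "dd s' = dd s"
proof -
  have s: "s \<in> SSplus" "dd s = card (supp s)" using assms(1) unfolding SSplus_circ_def by auto
  have fin: "finite (supp s)" using finite_supp_SSplus[OF s(1)] .
  have "card (supp s) \<le> SC (alternating_witness (supp s))"
    by (rule card_le_SC_alternating_witness[OF fin])
  also have "\<dots> \<le> dd s'"
    using assms(4) by (intro SC_alternating_witness_le_dd[OF assms(2) fin]) blast
  finally show ?thesis using dd_mono[OF s(1) assms(2,3)] s(2) by simp
qed

section \<open>The floor of a thinned support\<close>

lemma even_run_above_below_gap:
  assumes "finite D" "\<And>r. r \<in> D - S \<Longrightarrow> odd (run_above D r)" "b \<in> D" "Suc b \<notin> S"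
  shows "even (run_above D b)"
proof (cases "Suc b \<in> D")
  case True
  then show ?thesis using assms(2,4) run_above_Suc[OF assms(1,3) True] by auto
qed (simp add: run_above_eq_0)

lemma below_odd_max_interval_mem:
  assumes "finite D" "even_blocks D" "S \<subseteq> D" "\<And>r. r \<in> D - S \<Longrightarrow> odd (run_above D r)"
    and "max_interval S X" "0 \<notin> X" "odd (card X)"
  shows "Min X - 1 \<in> D"
proof -
  obtain a b where ab: "a \<le> b" "X = {a..b}" "{a..b} \<subseteq> D" "Suc b \<notin> S" "0 < a"
    using assms(3,5,6) unfolding max_interval_def by fastforce
  have "even (run_above D b)"
    using even_run_above_below_gap[of D S b, OF assms(1,4)] ab by auto
  then have "even (run_above D a)"
    using run_above_atLeastAtMost[OF assms(1) ab(1,3)] assms(7) ab(1,2) by simp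
  then have "a - 1 \<in> D" using assms(2) ab unfolding even_blocks_def by auto
  moreover have "Min X = a" using ab by (auto intro!: Min_eqI)
  ultimately show ?thesis by simp
qed

lemma removed_below_odd_max_interval:
  assumes "finite D" "S \<subseteq> D" "\<And>r. r \<in> D - S \<Longrightarrow> odd (run_above D r)" "r \<in> D - S"
  shows "\<exists>X. r = Min X - 1 \<and> max_interval S X \<and> 0 \<notin> X \<and> odd (card X)"
proof -
  have "odd (run_above D r)" using assms(3,4) by blast
  then have "Suc r \<in> D" using run_above_eq_0[of r D] by fastforce
  then have "even (run_above D (Suc r))"
    using run_above_Suc[OF assms(1) _ \<open>Suc r \<in> D\<close>] assms(4) \<open>odd (run_above D r)\<close> by simp
  then have "Suc r \<in> S" using assms(3) \<open>Suc r \<in> D\<close> by blast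
  define B where "B = {z. Suc r \<le> z \<and> {Suc r..z} \<subseteq> S}"
  define b where "b = Max B"
  have "finite S" using assms(1,2) by (rule finite_subset[rotated])
  then have "finite B" unfolding B_def by (rule finite_subset[rotated]) auto
  moreover have "Suc r \<in> B" using \<open>Suc r \<in> S\<close> unfolding B_def by simp
  ultimately have "b \<in> B" "\<And>z. z \<in> B \<Longrightarrow> z \<le> b" unfolding b_def by (auto intro: Max_in)
  then have b: "{Suc r..b} \<subseteq> S" "Suc r \<le> b" "\<And>z. Suc r \<le> z \<Longrightarrow> {Suc r..z} \<subseteq> S \<Longrightarrow> z \<le> b"
    unfolding B_def by auto
  have "Suc b \<notin> S"
    using b(3)[of "Suc b"] b(1,2) by (auto simp: atLeastAtMostSuc_conv)
  then have "even (run_above D b)"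
    using even_run_above_below_gap[of D S b, OF assms(1,3)] b(1,2) assms(2) by force
  then have "odd (card {Suc r..b})"
    using run_above_atLeastAtMost[OF assms(1) b(2)] b(1,2) assms(2) \<open>even (run_above D (Suc r))\<close>
    by auto
  moreover have "max_interval S {Suc r..b}"
    unfolding max_interval_def using b \<open>Suc b \<notin> S\<close> assms(4) by auto
  moreover have "Min {Suc r..b} = Suc r" using b(2) by (auto intro!: Min_eqI)
  ultimately show ?thesis by (intro exI[of _ "{Suc r..b}"]) auto
qed

lemma sfloor_eq_if_removed_odd_run_above:
  assumes "s \<in> SSplus_circ" "s' \<in> SSplus" "supp s' \<subseteq> supp s"
    and "\<And>r. r \<in> supp s - supp s' \<Longrightarrow> odd (run_above (supp s) r)"
  shows "sfloor s' = s"
proof -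
  have s: "s \<in> SSplus" using assms(1) unfolding SSplus_circ_def by simp
  note fin = finite_supp_SSplus[OF s]
  let ?added = "{Min X - 1 | X. max_interval (supp s') X \<and> 0 \<notin> X \<and> odd (card X)}"
  have "?added \<subseteq> supp s"
    using below_odd_max_interval_mem[of "supp s" "supp s'", OF fin SSplus_circ_even_blocks[OF assms(1)] assms(3,4)] by blast
  moreover have "supp s - supp s' \<subseteq> ?added"
    using removed_below_odd_max_interval[of "supp s" "supp s'", OF fin assms(3,4)] by blast
  ultimately have "supp s' \<union> ?added = supp s" using assms(3) by blast
  then show ?thesis unfolding sfloor_def using of_supp_supp[OF s] by simp
qed

theorem mainTheorem12:
  fixes s s' :: sseq
  assumes "s \<in> SSplus_circ"
    and "s' \<in> SSplus"
    and "supp s' \<subset> supp s"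
    and "supp s - supp s' \<subseteq>
           {dec_supp s ! (2 * i - 1) | i. 1 \<le> 2 * i \<and> 2 * i \<le> length (dec_supp s)}"
  shows "s' \<notin> SSplus_circ \<and> sfloor s' = s \<and> sprec s s' \<and> dd s' = dd s"
proof -
  have s: "s \<in> SSplus" "dd s = card (supp s)" using assms(1) unfolding SSplus_circ_def by auto
  have removed: "\<And>r. r \<in> supp s - supp s' \<Longrightarrow> odd (run_above (supp s) r)"
    using odd_run_above_removed[OF assms(1,4)] by blast
  have dd: "dd s' = dd s"
    using dd_eq_if_removed_odd_run_above[OF assms(1,2) _ removed] assms(3) by blast
  have floor: "sfloor s' = s"
    using sfloor_eq_if_removed_odd_run_above[OF assms(1,2) _ removed] assms(3) by blast
  have "card (supp s') < card (supp s)"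
    using psubset_card_mono[OF finite_supp_SSplus[OF s(1)] assms(3)] .
  then have "s' \<notin> SSplus_circ" using dd s(2) unfolding SSplus_circ_def by auto
  moreover have "sprec s s'"
    using assms(1-3) s(1) SSplus_circ_sceil[OF assms(1)] floor
    unfolding sprec_def spreceq_def preceq0_def by auto
  ultimately show ?thesis using dd floor by simp
qed

end
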